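(* For every positive integer $n$, $$\sum_{j=1}^{n}\csc^4\left(\frac{(2j-1)\pi}{4n+2}\right) = \frac{8(n+1)n(n^2+n+1)}{3}.$$ *)

theory Defs
  imports Complex_Main
begin

definition csc :: "real \<Rightarrow> real" where
  "csc x = 1 / sin x"

end

theory Submission
  imports Defs "HOL-Computational_Algebra.Polynomial"
begin

text \<open>
  There is a real polynomial \<open>A\<^sub>n\<close> of degree at most \<open>n\<close> with \<open>A\<^sub>n(0) = 1\<close> and
  \<open>cos ((2n+1) x) = cos x \<cdot> A\<^sub>n(sin\<^sup>2 x)\<close>. The angles \<open>\<theta>\<^sub>j = (2j-1)\<pi>/(4n+2)\<close>, \<open>1 \<le> j \<le> n\<close>,
  lie in \<open>(0, \<pi>/2)\<close> and are zeros of \<open>cos ((2n+1) x)\<close>, so the \<open>n\<close> distinct numbers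
  \<open>sin\<^sup>2 \<theta>\<^sub>j\<close> are the roots of \<open>A\<^sub>n\<close> and \<open>A\<^sub>n(t) = \<Prod>\<^sub>j (1 - t csc\<^sup>2 \<theta>\<^sub>j)\<close>. The coefficients of
  \<open>t\<close> and \<open>t\<^sup>2\<close> in \<open>A\<^sub>n\<close>, computed from its recurrence, are therefore \<open>-e\<^sub>1\<close> and \<open>e\<^sub>2\<close> of the
  numbers \<open>csc\<^sup>2 \<theta>\<^sub>j\<close>, and the sum of their squares is \<open>e\<^sub>1\<^sup>2 - 2 e\<^sub>2\<close>.
\<close>

text \<open>The recurrence is \<open>cos ((2m+5) x) = 2 cos (2x) cos ((2m+3) x) - cos ((2m+1) x)\<close>
  with \<open>2 cos (2x) = 2 - 4 sin\<^sup>2 x\<close>.\<close>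

fun cos_odd_poly :: "nat \<Rightarrow> real poly" where
  "cos_odd_poly 0 = 1"
| "cos_odd_poly (Suc 0) = [:1, -4:]"
| "cos_odd_poly (Suc (Suc m)) = [:2, -4:] * cos_odd_poly (Suc m) - cos_odd_poly m"

lemma cos_odd_multiple_eq_poly_sin_sq:
  "cos (real (2 * m + 1) * x) = cos x * poly (cos_odd_poly m) ((sin x)\<^sup>2)"
proof (induction m rule: cos_odd_poly.induct)
  case 1
  show ?case by simp
next
  case 2
  have "cos (3 * x) = cos x * (4 * (cos x)\<^sup>2 - 3)"
    unfolding cos_treble_cos by (simp add: power2_eq_square power3_eq_cube algebra_simps)
  then show ?case by (simp add: cos_squared_eq algebra_simps)
next
  case (3 m)
  let ?y = "real (2 * Suc m + 1) * x"
  have "cos (real (2 * Suc (Suc m) + 1) * x) = cos (?y + 2 * x)"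
    by (simp add: algebra_simps)
  also have "\<dots> = 2 * cos (2 * x) * cos ?y - cos (?y - 2 * x)"
    by (simp add: cos_add cos_diff)
  also have "?y - 2 * x = real (2 * m + 1) * x"
    by (simp add: algebra_simps)
  finally show ?case
    unfolding 3 cos_double_sin by (simp add: algebra_simps)
qed

lemma degree_cos_odd_poly: "degree (cos_odd_poly m) \<le> m"
proof (induction m rule: cos_odd_poly.induct)
  case (3 m)
  have "degree ([:2, -4:] * cos_odd_poly (Suc m)) \<le> Suc (Suc m)"
    using degree_mult_le[of "[:2, -4:]" "cos_odd_poly (Suc m)"] 3(1) by simp
  with 3(2) show ?case by (simp add: degree_diff_le)
qed auto

lemma poly_cos_odd_poly_0: "poly (cos_odd_poly m) 0 = 1"
  using cos_odd_multiple_eq_poly_sin_sq[of m 0] by simp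

lemma coeff_cos_odd_poly_1: "coeff (cos_odd_poly m) 1 = - 2 * real m * (real m + 1)"
proof (induction m rule: cos_odd_poly.induct)
  case (3 m)
  then show ?case
    using poly_cos_odd_poly_0[of "Suc m"]
    by (simp add: poly_0_coeff_0 algebra_simps)
qed auto

lemma coeff_cos_odd_poly_2:
  "coeff (cos_odd_poly m) 2 = 2 * real m * (real m + 1) * (real m + 2) * (real m - 1) / 3"
proof (induction m rule: cos_odd_poly.induct)
  case (3 m)
  then show ?case
    using coeff_cos_odd_poly_1[of "Suc m"]
    by (simp add: numeral_2_eq_2 field_simps)
qed (auto simp: numeral_2_eq_2)

lemma coeff_0_prod_linear_factors: "coeff (\<Prod>j\<in>S. [:1, - a j:]) 0 = 1"
  by (simp add: poly_0_coeff_0[symmetric] poly_prod)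

lemma coeff_1_prod_linear_factors:
  fixes a :: "'b \<Rightarrow> 'a::comm_ring_1"
  assumes "finite S"
  shows "coeff (\<Prod>j\<in>S. [:1, - a j:]) 1 = - (\<Sum>j\<in>S. a j)"
  using assms
  by (induction S rule: finite_induct) (simp_all add: coeff_0_prod_linear_factors)

lemma coeff_2_prod_linear_factors:
  fixes a :: "'b \<Rightarrow> 'a::comm_ring_1"
  assumes "finite S"
  shows "2 * coeff (\<Prod>j\<in>S. [:1, - a j:]) 2 = (\<Sum>j\<in>S. a j)\<^sup>2 - (\<Sum>j\<in>S. (a j)\<^sup>2)"
  using assms
proof (induction S rule: finite_induct)
  case (insert b S)
  define q where "q = (\<Prod>j\<in>S. [:1, - a j:])"
  have "coeff (\<Prod>j\<in>insert b S. [:1, - a j:]) 2 = coeff q 2 - a b * coeff q 1"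
    using insert(1,2) by (simp add: q_def mult_pCons_left numeral_2_eq_2)
  moreover have "coeff q 1 = - (\<Sum>j\<in>S. a j)"
    unfolding q_def using insert(1) by (rule coeff_1_prod_linear_factors)
  ultimately show ?case
    using insert by (simp add: q_def power2_eq_square algebra_simps)
qed simp

lemma poly_eq_prod_nonzero_roots:
  fixes p :: "'a::field poly"
  assumes "finite S" "degree p \<le> card S" "inj_on r S"
    and "\<And>j. j \<in> S \<Longrightarrow> r j \<noteq> 0" "\<And>j. j \<in> S \<Longrightarrow> poly p (r j) = 0"
    and "poly p 0 = 1"
  shows "p = (\<Prod>j\<in>S. [:1, - inverse (r j):])"
proof (rule poly_eqI_degree)
  let ?A = "insert 0 (r ` S)"
  show "poly p x = poly (\<Prod>j\<in>S. [:1, - inverse (r j):]) x" if x: "x \<in> ?A" for x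
  proof (cases "x = 0")
    case False
    then obtain j where "j \<in> S" "x = r j" using x by blast
    then show ?thesis
      using assms by (auto simp: poly_prod prod_zero_iff intro!: bexI[of _ j])
  qed (use assms in \<open>simp add: poly_prod\<close>)
  have card_A: "card ?A = Suc (card S)"
    using assms by (subst card_insert_disjoint) (auto simp: card_image)
  have "degree (\<Prod>j\<in>S. [:1, - inverse (r j):]) \<le> (\<Sum>j\<in>S. degree [:1, - inverse (r j):])"
    using degree_prod_sum_le[OF \<open>finite S\<close>] unfolding o_def .
  also have "\<dots> \<le> card S"
    using sum_mono[of S "\<lambda>j. degree [:1, - inverse (r j):]" "\<lambda>_. 1"] by simp
  finally have "degree (\<Prod>j\<in>S. [:1, - inverse (r j):]) \<le> card S" .
  with card_A show "degree p < card ?A" "degree (\<Prod>j\<in>S. [:1, - inverse (r j):]) < card ?A"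
    using assms(2) by simp_all
qed

definition odd_angle :: "nat \<Rightarrow> nat \<Rightarrow> real" where
  "odd_angle n j = (2 * real j - 1) * pi / (4 * real n + 2)"

lemma odd_angle_bounds:
  assumes "j \<in> {1..n}"
  shows "0 < odd_angle n j" "odd_angle n j < pi / 2"
proof -
  have pos: "0 < (2 * real j - 1) * pi"
    using assms by simp
  have "(2 * real j - 1) * pi < (2 * real n + 1) * pi"
    using assms by (intro mult_strict_right_mono) auto
  also have "\<dots> = pi / 2 * (4 * real n + 2)"
    by (simp add: algebra_simps)
  finally show "0 < odd_angle n j" "odd_angle n j < pi / 2"
    using pos by (simp_all add: odd_angle_def pos_divide_less_eq)
qed

lemma sin_odd_angle_pos:
  assumes "j \<in> {1..n}"
  shows "0 < sin (odd_angle n j)"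
  using odd_angle_bounds[OF assms] by (intro sin_gt_zero) auto

lemma cos_odd_multiple_odd_angle:
  assumes "j \<in> {1..n}"
  shows "cos (real (2 * n + 1) * odd_angle n j) = 0"
proof -
  have "real (2 * n + 1) * odd_angle n j = real (2 * j - 1) * (pi / 2)"
    using assms by (simp add: odd_angle_def of_nat_diff field_simps)
  moreover have "odd (2 * j - 1)"
    using assms by simp
  ultimately show ?thesis
    unfolding cos_zero_iff by blast
qed

lemma poly_cos_odd_poly_sin_sq_odd_angle:
  assumes "j \<in> {1..n}"
  shows "poly (cos_odd_poly n) ((sin (odd_angle n j))\<^sup>2) = 0"
proof -
  have "0 < cos (odd_angle n j)"
    using odd_angle_bounds[OF assms] by (intro cos_gt_zero) auto
  then show ?thesis
    using cos_odd_multiple_eq_poly_sin_sq[of n "odd_angle n j"] cos_odd_multiple_odd_angle[OF assms]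
    by simp
qed

lemma inj_on_sin_sq_odd_angle: "inj_on (\<lambda>j. (sin (odd_angle n j))\<^sup>2) {1..n}"
proof (rule inj_onI)
  fix i j
  assume i: "i \<in> {1..n}" and j: "j \<in> {1..n}"
    and eq: "(sin (odd_angle n i))\<^sup>2 = (sin (odd_angle n j))\<^sup>2"
  have "sin (odd_angle n i) = sin (odd_angle n j)"
    using power2_eq_imp_eq[OF eq] sin_odd_angle_pos[OF i] sin_odd_angle_pos[OF j] by simp
  then have "odd_angle n i = odd_angle n j"
    by (rule sin_inj_pi[rotated 4]) (use odd_angle_bounds[OF i] odd_angle_bounds[OF j] in linarith)+
  then show "i = j"
    by (simp add: odd_angle_def)
qed

theorem mainTheorem19:
  fixes n :: nat
  assumes "n \<ge> 1"
  shows "(\<Sum>j=1..n. (csc ((2 * real j - 1) * pi / (4 * real n + 2))) ^ 4)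
           = 8 * (real n + 1) * real n * ((real n)^2 + real n + 1) / 3"
proof -
  define a where "a j = inverse ((sin (odd_angle n j))\<^sup>2)" for j
  have factorization: "cos_odd_poly n = (\<Prod>j\<in>{1..n}. [:1, - a j:])"
    unfolding a_def
  proof (rule poly_eq_prod_nonzero_roots)
    show "(sin (odd_angle n j))\<^sup>2 \<noteq> 0" if "j \<in> {1..n}" for j
      using sin_odd_angle_pos[OF that] by simp
  qed (use inj_on_sin_sq_odd_angle in \<open>simp_all add: degree_cos_odd_poly poly_cos_odd_poly_0
      poly_cos_odd_poly_sin_sq_odd_angle\<close>)
  have "(\<Sum>j=1..n. a j) = 2 * real n * (real n + 1)"
    using coeff_1_prod_linear_factors[of "{1..n}" a] coeff_cos_odd_poly_1[of n]
    unfolding factorization by simp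
  moreover have "2 * (2 * real n * (real n + 1) * (real n + 2) * (real n - 1) / 3)
      = (\<Sum>j=1..n. a j)\<^sup>2 - (\<Sum>j=1..n. (a j)\<^sup>2)"
    using coeff_2_prod_linear_factors[of "{1..n}" a] coeff_cos_odd_poly_2[of n]
    unfolding factorization by simp
  ultimately have "(\<Sum>j=1..n. (a j)\<^sup>2) = 8 * (real n + 1) * real n * ((real n)^2 + real n + 1) / 3"
    by (simp add: field_simps power2_eq_square)
  moreover have "(csc (odd_angle n j)) ^ 4 = (a j)\<^sup>2" for j
    by (simp add: csc_def a_def inverse_eq_divide power_divide flip: power_mult)
  ultimately show ?thesis
    by (simp add: odd_angle_def)
qed

end
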